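(* In the deterministic $\mathsf{CD}$ model, deterministic $\mathsf{SR}$-communication with messages in $\{1,\ldots,M\}$ can be solved in $O(\min\{M,N\})$ time using $O(\min\{\log M,\log N\})$ energy.
   Context: Radio network: connected undirected graph; synchronized slots; each vertex transmits, listens or idles per slot, transmit/listen costing one unit of energy (energy = maximum per-vertex number of such slots). $\mathsf{CD}$: a listener receives the message if exactly one neighbor transmits, hears silence if none, and noise (distinguishable from silence) if at least two. Deterministic setting: vertices have distinct IDs in $\{1,\ldots,N\}$. $N^+(v)=N(v)\cup\{v\}$. Deterministic $\mathsf{SR}$-communication: given two (not necessarily disjoint) vertex sets $S$ and $R$, each $u\in S$ has a message $m_u\in\{1,\ldots,M\}$, and the goal is that every $v\in R$ with $N^+(v)\cap S\neq\emptyset$ learns $m_u$ for some $u\in N^+(v)\cap S$. *)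

theory Defs
  imports Complex_Main
begin

text \<open>Vertices are identified with their distinct IDs, so the vertex set V is a
  subset of {1..N}.\<close>

datatype action = Transmit nat | Listen | Idle

datatype feedback = Silence | Noise | Received nat | NoFeedback

fun is_transmit :: "action \<Rightarrow> bool" where
  "is_transmit (Transmit _) = True"
| "is_transmit _ = False"

fun payload :: "action \<Rightarrow> nat" where
  "payload (Transmit m) = m"
| "payload _ = 0"

text \<open>Input of a vertex: its message if it is in S, and whether it is in R.\<close>
type_synonym input = "nat option \<times> bool"

text \<open>Local rule of a deterministic protocol (already instantiated with N and M):
  own ID, own input, history of feedbacks so far \<mapsto> action of the current slot.\<close>
type_synonym local_rule = "nat \<Rightarrow> input \<Rightarrow> feedback list \<Rightarrow> action"

definition cd_feedback :: "(nat \<Rightarrow> nat \<Rightarrow> bool) \<Rightarrow> (nat \<Rightarrow> action) \<Rightarrow> nat \<Rightarrow> feedback" where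
  "cd_feedback adj A v =
     (if A v = Listen then
        (if (\<exists>!u. adj v u \<and> is_transmit (A u))
         then Received (payload (A (THE u. adj v u \<and> is_transmit (A u))))
         else if (\<exists>u. adj v u \<and> is_transmit (A u)) then Noise else Silence)
      else NoFeedback)"

primrec histories :: "local_rule \<Rightarrow> (nat \<Rightarrow> nat \<Rightarrow> bool) \<Rightarrow> (nat \<Rightarrow> input) \<Rightarrow> nat \<Rightarrow> nat \<Rightarrow> feedback list" where
  "histories P adj inp 0 = (\<lambda>v. [])"
| "histories P adj inp (Suc t) =
     (let h = histories P adj inp t;
          A = (\<lambda>u. P u (inp u) (h u))
      in (\<lambda>v. h v @ [cd_feedback adj A v]))"

definition simple_graph :: "nat set \<Rightarrow> (nat \<Rightarrow> nat \<Rightarrow> bool) \<Rightarrow> bool" where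
  "simple_graph V adj \<longleftrightarrow> finite V \<and>
     (\<forall>u v. adj u v \<longrightarrow> u \<in> V \<and> v \<in> V \<and> u \<noteq> v \<and> adj v u)"

definition connected_graph :: "nat set \<Rightarrow> (nat \<Rightarrow> nat \<Rightarrow> bool) \<Rightarrow> bool" where
  "connected_graph V adj \<longleftrightarrow> V \<noteq> {} \<and> (\<forall>u\<in>V. \<forall>v\<in>V. adj\<^sup>*\<^sup>* u v)"

end

(* Each sender gets a key below 2^b, where b = ceil (log2 (min M N)): its message if M \<le> N,
   its ID otherwise.  Time is cut into phases j = 1, ..., b + 1 of 2^j slots each, and in phase j
   a sender transmits in the slot indexed by the j-bit prefix of its key.  A receiver outside S
   learns the maximum key among its neighbours in S bit by bit: knowing its (j - 1)-bit prefix p,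
   it listens in slot 2p + 1 of phase j, and collision detection tells silence (no key extends p
   by a one) from everything else.  If keys are messages, the maximum key is a neighbour's message
   minus one; if keys are IDs, the neighbour with the largest ID transmits alone in slot p of
   phase b + 1, p being the whole key by then.  Every vertex acts at most once per phase, so the
   energy is b + 1 and the time is 3 * 2^b - 2 < 6 min M N. *)

theory Submission
  imports Defs "HOL-Library.Discrete_Functions" "HOL-Library.Log_Nat"
begin

lemma length_histories [simp]: "length (histories P adj inp t v) = t"
  by (induction t arbitrary: v) (auto simp: Let_def)

lemma nth_histories:
  "s < t \<Longrightarrow> histories P adj inp t v ! s = cd_feedback adj (\<lambda>u. P u (inp u) (histories P adj inp s u)) v"
  by (induction t) (auto simp: Let_def nth_append less_Suc_eq)

lemma histories_eq_take:
  "s \<le> t \<Longrightarrow> histories P adj inp s v = take s (histories P adj inp t v)"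
  by (rule nth_equalityI) (auto simp: nth_histories)

lemma cd_feedback_eq_Silence_iff:
  "cd_feedback adj A v = Silence \<longleftrightarrow> A v = Listen \<and> (\<forall>u. adj v u \<longrightarrow> \<not> is_transmit (A u))"
  unfolding cd_feedback_def by auto

lemma cd_feedback_unique_transmitter:
  assumes "A v = Listen" and "A u = Transmit m"
    and "\<And>w. adj v w \<Longrightarrow> is_transmit (A w) \<Longrightarrow> w = u" and "adj v u"
  shows "cd_feedback adj A v = Received m"
proof -
  have unique: "adj v w \<and> is_transmit (A w) \<longleftrightarrow> w = u" for w
    using assms(2,4) assms(3)[of w] by auto
  then have "(THE w. adj v w \<and> is_transmit (A w)) = u"
    by simp
  then show ?thesis
    using assms(1,2) unique unfolding cd_feedback_def by auto
qed

(* Phase j \<ge> 1 consists of the slots 2^j - 2, ..., 2^(j+1) - 3. *)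
definition slot :: "nat \<Rightarrow> nat \<Rightarrow> nat" where
  "slot j i = 2 ^ j - 2 + i"

definition phase :: "nat \<Rightarrow> nat" where
  "phase t = floor_log (t + 2)"

definition offset :: "nat \<Rightarrow> nat" where
  "offset t = t + 2 - 2 ^ phase t"

lemma
  assumes "1 \<le> j" and "i < 2 ^ j"
  shows phase_slot: "phase (slot j i) = j" and offset_slot: "offset (slot j i) = i"
proof -
  have "(2::nat) ^ 1 \<le> 2 ^ j"
    using assms(1) by (rule power_increasing) simp
  then have "slot j i + 2 = 2 ^ j + i"
    unfolding slot_def by simp
  then show "phase (slot j i) = j"
    unfolding phase_def using assms(2) by (intro floor_log_eqI) auto
  with \<open>slot j i + 2 = 2 ^ j + i\<close> show "offset (slot j i) = i"
    unfolding offset_def by simp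
qed

lemma phase_ge_1: "1 \<le> phase t"
proof -
  have "floor_log (2 ^ 1) \<le> floor_log (t + 2)"
    by (rule floor_log_le_iff) simp
  then show ?thesis
    unfolding phase_def by (simp only: floor_log_power)
qed

lemma slot_phase_offset: "slot (phase t) (offset t) = t"
proof -
  have "(2::nat) ^ 1 \<le> 2 ^ phase t"
    using phase_ge_1 by (rule power_increasing) simp
  moreover have "2 ^ phase t \<le> t + 2"
    unfolding phase_def by (rule floor_log_exp2_le) simp
  ultimately show ?thesis
    unfolding slot_def offset_def by simp
qed

lemma slot_phase_le: "slot (phase t) 0 \<le> t"
  using slot_phase_offset[of t] unfolding slot_def by linarith

lemma slot_less_next_phase: "i < 2 ^ Suc j \<Longrightarrow> slot (Suc j) i < slot (Suc (Suc j)) 0"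
  using one_le_power[of "2::nat" j] unfolding slot_def power_Suc by arith

lemma div_power2_less: "(x::nat) < 2 ^ n \<Longrightarrow> j \<le> n \<Longrightarrow> x div 2 ^ (n - j) < 2 ^ j"
  by (simp add: div_less_iff_less_mult flip: power_add)

lemma Max_div_eq:
  fixes X :: "nat set" and d :: nat
  assumes "finite X" and "X \<noteq> {}"
  defines "q \<equiv> Max X div (2 * d)"
  shows "Max X div d = 2 * q + (if \<exists>y\<in>X. y div d = 2 * q + 1 then 1 else 0)"
proof -
  have split: "Max X div d = 2 * q + Max X div d mod 2"
    unfolding q_def by (simp add: div_mult2_eq mult.commute)
  show ?thesis
  proof (cases "\<exists>y\<in>X. y div d = 2 * q + 1")
    case True
    then obtain y where "y \<in> X" and "y div d = 2 * q + 1"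
      by blast
    moreover from \<open>y \<in> X\<close> have "y div d \<le> Max X div d"
      using assms(1) by (simp add: div_le_mono)
    ultimately have "Max X div d mod 2 = 1"
      using split by linarith
    with split True show ?thesis
      by simp
  next
    case False
    with Max_in[OF assms(1,2)] have "Max X div d \<noteq> 2 * q + 1"
      by blast
    with split have "Max X div d mod 2 \<noteq> 1"
      by auto
    with split False show ?thesis
      by simp
  qed
qed

fun decoded_prefix :: "feedback list \<Rightarrow> nat \<Rightarrow> nat" where
  "decoded_prefix hs 0 = 0"
| "decoded_prefix hs (Suc j) = 2 * decoded_prefix hs j
     + (if hs ! slot (Suc j) (2 * decoded_prefix hs j + 1) = Silence then 0 else 1)"

lemma decoded_prefix_less: "decoded_prefix hs j < 2 ^ j"
  by (induction j) auto

lemma decoded_prefix_take: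
  "slot (Suc j) 0 \<le> n \<Longrightarrow> decoded_prefix (take n hs) j = decoded_prefix hs j"
proof (induction j)
  case 0
  then show ?case by simp
next
  case (Suc j)
  have "slot (Suc j) 0 \<le> slot (Suc (Suc j)) 0"
    unfolding slot_def by simp
  with Suc have IH: "decoded_prefix (take n hs) j = decoded_prefix hs j"
    by simp
  have "2 * decoded_prefix hs j + 1 < 2 ^ Suc j"
    using decoded_prefix_less[of hs j] by simp
  then have "slot (Suc j) (2 * decoded_prefix hs j + 1) < n"
    using slot_less_next_phase Suc.prems by (meson less_le_trans)
  then show ?case
    using IH by simp
qed

definition listen_offset :: "nat \<Rightarrow> feedback list \<Rightarrow> nat \<Rightarrow> nat" where
  "listen_offset b hs j = (if j \<le> b then 2 * decoded_prefix hs (j - 1) + 1 else decoded_prefix hs b)"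

lemma listen_offset_take:
  assumes "1 \<le> j" and "slot j 0 \<le> n"
  shows "listen_offset b (take n hs) j = listen_offset b hs j"
proof (cases "j \<le> b")
  case True
  with assms show ?thesis
    unfolding listen_offset_def by (simp add: decoded_prefix_take)
next
  case False
  then have "(2::nat) ^ Suc b \<le> 2 ^ j"
    by (intro power_increasing) auto
  then have "slot (Suc b) 0 \<le> n"
    using assms(2) unfolding slot_def by linarith
  with False show ?thesis
    unfolding listen_offset_def by (simp add: decoded_prefix_take)
qed

definition key_bits :: "nat \<Rightarrow> nat \<Rightarrow> nat" where
  "key_bits N M = ceillog2 (min M N)"

definition key :: "nat \<Rightarrow> nat \<Rightarrow> nat \<Rightarrow> nat \<Rightarrow> nat" where
  "key N M u m = (if M \<le> N then m - 1 else u - 1)"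

definition sr_rule :: "nat \<Rightarrow> nat \<Rightarrow> local_rule" where
  "sr_rule N M u inp hs =
     (let b = key_bits N M; t = length hs; j = phase t in
      if Suc b < j then Idle
      else case fst inp of
        Some m \<Rightarrow> if offset t = key N M u m div 2 ^ (b - j) then Transmit m else Idle
      | None \<Rightarrow> if snd inp \<and> offset t = listen_offset b hs j then Listen else Idle)"

definition sr_output :: "nat \<Rightarrow> nat \<Rightarrow> nat \<Rightarrow> input \<Rightarrow> feedback list \<Rightarrow> nat option" where
  "sr_output N M u inp hs =
     (let b = key_bits N M; p = decoded_prefix hs b in
      case fst inp of
        Some m \<Rightarrow> Some m
      | None \<Rightarrow> if M \<le> N then Some (p + 1)
                else (case hs ! slot (Suc b) p of Received m \<Rightarrow> Some m | _ \<Rightarrow> None))"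

definition sr_time :: "nat \<Rightarrow> nat \<Rightarrow> nat" where
  "sr_time N M = slot (Suc (key_bits N M)) (2 ^ key_bits N M)"

definition sr_input :: "nat set \<Rightarrow> nat set \<Rightarrow> (nat \<Rightarrow> nat) \<Rightarrow> nat \<Rightarrow> input" where
  "sr_input S R msg = (\<lambda>u. (if u \<in> S then Some (msg u) else None, u \<in> R))"

lemma Suc_key_bits_le:
  assumes "1 \<le> min M N"
  shows "real (Suc (key_bits N M)) \<le> 6 * log 2 (real (min M N)) + 6"
proof -
  have "real (key_bits N M) < log 2 (real (min M N)) + 1"
    unfolding key_bits_def using assms by (intro ceillog2_less_log) simp
  moreover have "0 \<le> log 2 (real (min M N))"
    using assms by simp
  ultimately show ?thesis
    by simp
qed

lemma sr_time_le:
  assumes "1 \<le> min M N"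
  shows "sr_time N M \<le> 6 * min M N"
proof -
  have "2 ^ key_bits N M < 2 * min M N"
    unfolding key_bits_def using assms by (intro two_power_ceillog2_gt) simp
  then show ?thesis
    unfolding sr_time_def slot_def by simp
qed

locale sr_instance =
  fixes N M :: nat and adj :: "nat \<Rightarrow> nat \<Rightarrow> bool" and S R :: "nat set" and msg :: "nat \<Rightarrow> nat"
  assumes finite_S: "finite S" and S_ids: "S \<subseteq> {1..N}" and msg_range: "\<forall>u\<in>S. msg u \<in> {1..M}"
begin

abbreviation "b \<equiv> key_bits N M"
abbreviation "hist \<equiv> histories (sr_rule N M) adj (sr_input S R msg)"
abbreviation "act t u \<equiv> sr_rule N M u (sr_input S R msg u) (hist t u)"

lemma key_less: "u \<in> S \<Longrightarrow> key N M u (msg u) < 2 ^ b"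
proof -
  assume "u \<in> S"
  with S_ids msg_range have "key N M u (msg u) < min M N"
    unfolding key_def by force
  then show ?thesis
    unfolding key_bits_def using le_two_power_ceillog2 by (rule less_le_trans)
qed

lemma act_eq_Transmit:
  "u \<in> S \<Longrightarrow> phase t \<le> Suc b \<Longrightarrow> offset t = key N M u (msg u) div 2 ^ (b - phase t)
    \<Longrightarrow> act t u = Transmit (msg u)"
  by (simp add: sr_rule_def sr_input_def)

lemma is_transmit_act_iff:
  "is_transmit (act t u) \<longleftrightarrow>
     u \<in> S \<and> phase t \<le> Suc b \<and> offset t = key N M u (msg u) div 2 ^ (b - phase t)"
  by (simp add: sr_rule_def sr_input_def Let_def)

lemma act_eq_Listen_iff:
  "act t v = Listen \<longleftrightarrow>
     v \<notin> S \<and> v \<in> R \<and> phase t \<le> Suc b \<and> offset t = listen_offset b (hist t v) (phase t)"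
  by (auto simp: sr_rule_def sr_input_def Let_def)

lemma offset_of_active:
  assumes "act t v \<noteq> Idle"
  shows "phase t \<le> Suc b \<and> offset t = (if v \<in> S then key N M v (msg v) div 2 ^ (b - phase t)
                                          else listen_offset b (hist t v) (phase t))"
  using assms by (auto simp: sr_rule_def sr_input_def Let_def split: if_splits)

lemma active_slots_card_le: "card {t. t < T \<and> act t v \<noteq> Idle} \<le> Suc b"
proof -
  let ?A = "{t. t < T \<and> act t v \<noteq> Idle}"
  have same_offset: "offset s = offset t"
    if "s \<in> ?A" "t \<in> ?A" "phase s = phase t" "s \<le> t" for s t
  proof -
    have "listen_offset b (hist s v) (phase s) = listen_offset b (hist t v) (phase s)"
      using \<open>s \<le> t\<close> phase_ge_1 slot_phase_le
      by (simp add: histories_eq_take[of s t] listen_offset_take)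
    moreover have "act s v \<noteq> Idle" and "act t v \<noteq> Idle"
      using that by auto
    ultimately show ?thesis
      using offset_of_active[where t = s] offset_of_active[where t = t] \<open>phase s = phase t\<close> by simp
  qed
  have "inj_on phase ?A"
  proof (rule inj_onI)
    fix s t assume "s \<in> ?A" "t \<in> ?A" "phase s = phase t"
    then have "offset s = offset t"
      using same_offset[of s t] same_offset[of t s] by fastforce
    with \<open>phase s = phase t\<close> show "s = t"
      by (metis slot_phase_offset)
  qed
  moreover have "phase ` ?A \<subseteq> {1..Suc b}"
    using offset_of_active phase_ge_1 by auto
  ultimately have "card ?A \<le> card {1..Suc b}"
    by (intro card_inj_on_le) auto
  then show ?thesis
    by simp
qed

lemma feedback_eq_Silence_iff:
  assumes "s < t" and "act s v = Listen"
  shows "hist t v ! s = Silence \<longleftrightarrow>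
           (\<forall>u\<in>S. adj v u \<longrightarrow> offset s \<noteq> key N M u (msg u) div 2 ^ (b - phase s))"
  using assms act_eq_Listen_iff[where t = s]
  by (auto simp: nth_histories cd_feedback_eq_Silence_iff is_transmit_act_iff)

context
  fixes v assumes v_R: "v \<in> R" and v_not_S: "v \<notin> S" and v_hears_S: "\<exists>u\<in>S. adj v u"
begin

definition max_key :: nat where
  "max_key = Max ((\<lambda>u. key N M u (msg u)) ` {u \<in> S. adj v u})"

lemma max_key_Max_div_eq:
  "max_key div d = 2 * (max_key div (2 * d))
     + (if \<exists>u\<in>S. adj v u \<and> key N M u (msg u) div d = 2 * (max_key div (2 * d)) + 1 then 1 else 0)"
  unfolding max_key_def using finite_S v_hears_S by (subst Max_div_eq) auto

lemma max_key_attained: "\<exists>u\<in>S. adj v u \<and> key N M u (msg u) = max_key"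
proof -
  have "max_key \<in> (\<lambda>u. key N M u (msg u)) ` {u \<in> S. adj v u}"
    unfolding max_key_def using finite_S v_hears_S by (intro Max_in) auto
  then show ?thesis
    by force
qed

lemma max_key_less: "max_key < 2 ^ b"
  using max_key_attained key_less by metis

lemma decoded_prefix_hist:
  "j \<le> b \<Longrightarrow> slot (Suc j) 0 \<le> t \<Longrightarrow> decoded_prefix (hist t v) j = max_key div 2 ^ (b - j)"
proof (induction j arbitrary: t)
  case 0
  then show ?case
    using max_key_less by simp
next
  case (Suc j)
  define p where "p = max_key div 2 ^ (b - j)"
  define s where "s = slot (Suc j) (2 * p + 1)"
  have "p < 2 ^ j"
    unfolding p_def using max_key_less Suc.prems(1) by (intro div_power2_less) auto
  then have "2 * p + 1 < 2 ^ Suc j"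
    by simp
  then have phase_s: "phase s = Suc j" and offset_s: "offset s = 2 * p + 1"
    and "s < slot (Suc (Suc j)) 0"
    unfolding s_def by (simp_all add: phase_slot offset_slot slot_less_next_phase)
  with Suc.prems(2) have "s < t"
    by linarith
  have "slot (Suc j) 0 \<le> slot (Suc (Suc j)) 0" "slot (Suc j) 0 \<le> s"
    unfolding s_def slot_def by simp_all
  then have prefix_t: "decoded_prefix (hist t v) j = p" and prefix_s: "decoded_prefix (hist s v) j = p"
    using Suc unfolding p_def by auto
  have "act s v = Listen"
    using Suc.prems(1) phase_s offset_s prefix_s v_R v_not_S
    by (simp add: act_eq_Listen_iff listen_offset_def)
  then have "hist t v ! s = Silence \<longleftrightarrow>
      \<not> (\<exists>u\<in>S. adj v u \<and> key N M u (msg u) div 2 ^ (b - Suc j) = 2 * p + 1)"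
    using \<open>s < t\<close> phase_s offset_s by (auto simp: feedback_eq_Silence_iff)
  moreover have "2 * 2 ^ (b - Suc j) = (2::nat) ^ (b - j)"
    using Suc.prems(1) by (simp flip: power_Suc add: Suc_diff_Suc)
  ultimately show ?case
    using prefix_t max_key_Max_div_eq[of "2 ^ (b - Suc j)"] unfolding s_def p_def by simp
qed

lemma sr_output_from_neighbour:
  "\<exists>u\<in>S. adj v u \<and> sr_output N M v (sr_input S R msg v) (hist (sr_time N M) v) = Some (msg u)"
proof -
  obtain u where u: "u \<in> S" "adj v u" "key N M u (msg u) = max_key"
    using max_key_attained by blast
  have prefix: "decoded_prefix (hist (sr_time N M) v) b = max_key"
    using decoded_prefix_hist[of b] by (simp add: sr_time_def slot_def)
  show ?thesis
  proof (cases "M \<le> N")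
    case True
    with u msg_range have "msg u = max_key + 1"
      unfolding key_def by force
    with u True prefix v_not_S show ?thesis
      by (auto simp: sr_output_def sr_input_def Let_def)
  next
    case False
    define s where "s = slot (Suc b) max_key"
    have "max_key < 2 ^ Suc b"
      using max_key_less by simp
    then have phase_s: "phase s = Suc b" and offset_s: "offset s = max_key"
      unfolding s_def by (simp_all add: phase_slot offset_slot)
    have "s < sr_time N M"
      unfolding s_def sr_time_def slot_def using max_key_less by simp
    have "decoded_prefix (hist s v) b = max_key"
      using decoded_prefix_hist[of b s] by (simp add: s_def slot_def)
    then have "act s v = Listen"
      using phase_s offset_s v_R v_not_S by (simp add: act_eq_Listen_iff listen_offset_def)
    moreover have "act s u = Transmit (msg u)"
      using act_eq_Transmit u phase_s offset_s by simp
    moreover have "w = u" if "adj v w" and "is_transmit (act s w)" for w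
    proof -
      from that have "w \<in> S" and "key N M w (msg w) = key N M u (msg u)"
        using phase_s offset_s u by (auto simp: is_transmit_act_iff)
      then have "w - 1 = u - 1" and "1 \<le> w" and "1 \<le> u"
        using u(1) S_ids False by (auto simp: key_def)
      then show ?thesis
        by linarith
    qed
    ultimately have "hist (sr_time N M) v ! s = Received (msg u)"
      unfolding nth_histories[OF \<open>s < sr_time N M\<close>] using u(2)
      by (rule cd_feedback_unique_transmitter)
    with u False prefix v_not_S show ?thesis
      by (auto simp: sr_output_def sr_input_def Let_def s_def)
  qed
qed

end

lemma sr_output_correct:
  assumes "v \<in> R" and "\<exists>u\<in>S. u = v \<or> adj v u"
  shows "\<exists>u\<in>S. (u = v \<or> adj v u) \<and>
           sr_output N M v (sr_input S R msg v) (hist (sr_time N M) v) = Some (msg u)"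
proof (cases "v \<in> S")
  case True
  then show ?thesis
    by (auto simp: sr_output_def sr_input_def Let_def)
next
  case False
  with assms show ?thesis
    using sr_output_from_neighbour by blast
qed

end

theorem sr_guarantees:
  fixes N M :: nat and V S R :: "nat set" and adj :: "nat \<Rightarrow> nat \<Rightarrow> bool" and msg :: "nat \<Rightarrow> nat"
  assumes "1 \<le> N" and "1 \<le> M" and "V \<subseteq> {1..N}" and "simple_graph V adj"
    and "S \<subseteq> V" and "\<forall>u\<in>S. msg u \<in> {1..M}"
  defines "h \<equiv> histories (sr_rule N M) adj (sr_input S R msg)"
  shows "(\<forall>v\<in>R. (\<exists>u\<in>S. u = v \<or> adj v u) \<longrightarrow>
            (\<exists>u\<in>S. (u = v \<or> adj v u) \<and>
               sr_output N M v (sr_input S R msg v) (h (sr_time N M) v) = Some (msg u)))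
       \<and> (\<forall>v\<in>V. real (card {t. t < sr_time N M \<and> sr_rule N M v (sr_input S R msg v) (h t v) \<noteq> Idle})
             \<le> 6 * log 2 (real (min M N)) + 6)
       \<and> real (sr_time N M) \<le> 6 * real (min M N)"
proof -
  interpret sr_instance N M adj S R msg
    using assms(3-6) by unfold_locales (auto simp: simple_graph_def intro: finite_subset)
  have "1 \<le> min M N"
    using assms(1,2) by simp
  then have "real (card {t. t < sr_time N M \<and> act t v \<noteq> Idle}) \<le> 6 * log 2 (real (min M N)) + 6"
    for v using active_slots_card_le Suc_key_bits_le by (meson of_nat_le_iff order_trans)
  moreover have "real (sr_time N M) \<le> 6 * real (min M N)"
    using sr_time_le \<open>1 \<le> min M N\<close> by (metis of_nat_le_iff of_nat_mult of_nat_numeral)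
  ultimately show ?thesis
    unfolding h_def using sr_output_correct by blast
qed

theorem lemma14:
  shows "\<exists>(act :: nat \<Rightarrow> nat \<Rightarrow> local_rule)
            (out :: nat \<Rightarrow> nat \<Rightarrow> nat \<Rightarrow> input \<Rightarrow> feedback list \<Rightarrow> nat option)
            (T :: nat \<Rightarrow> nat \<Rightarrow> nat) (c :: real).
     \<forall>N M V adj S R (msg :: nat \<Rightarrow> nat).
       1 \<le> N \<longrightarrow> 1 \<le> M \<longrightarrow> V \<subseteq> {1..N} \<longrightarrow>
       simple_graph V adj \<longrightarrow> connected_graph V adj \<longrightarrow>
       S \<subseteq> V \<longrightarrow> R \<subseteq> V \<longrightarrow> (\<forall>u\<in>S. msg u \<in> {1..M}) \<longrightarrow>
       (let inp = (\<lambda>u. (if u \<in> S then Some (msg u) else None, u \<in> R));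
            P = act N M;
            h = histories P adj inp
        in (\<forall>v\<in>R. (\<exists>u\<in>S. u = v \<or> adj v u) \<longrightarrow>
               (\<exists>u\<in>S. (u = v \<or> adj v u) \<and> out N M v (inp v) (h (T N M) v) = Some (msg u)))
           \<and> (\<forall>v\<in>V. real (card {t. t < T N M \<and> P v (inp v) (h t v) \<noteq> Idle})
                      \<le> c * log 2 (real (min M N)) + c)
           \<and> real (T N M) \<le> c * real (min M N))"
  by (intro exI[of _ sr_rule] exI[of _ sr_output] exI[of _ sr_time] exI[of _ 6] allI impI)
    (unfold sr_input_def[symmetric] Let_def, rule sr_guarantees)

end
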